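(* Consider the following symmetric two-player game between two responders, induced by two fixed offers $s_1,s_2\in[0,1]$ with $s_1\le s_2$, $s_2>0$ and $s_2<2s_1$. Each responder chooses proposer 1 with probability $p$ and proposer 2 with probability $1-p$, where $p\in[0,1]$. If responder 1 uses $p$ and responder 2 uses $q$, the expected payoff of responder 1 is $$\Pi(p,q)=s_1\,p\Big(1-q+\tfrac{q}{2}\Big)+s_2\,(1-p)\Big(q+\tfrac{1-q}{2}\Big),$$ and that of responder 2 is $\Pi(q,p)$. Then the strategy $$p_A=\frac{2s_1-s_2}{s_1+s_2}$$ is an evolutionarily stable strategy of this game, and it is the unique evolutionarily stable strategy of this game.
   Context: The game arises from the Multi-Proposer-Multi-Responder Ultimatum Game with two proposers and two responders: each proposer $i$ offers a share $s_i$ of a reward of size one to the responders; each responder selects one proposer (possibly at random); a proposer chosen by at least one responder receives $1-s_i$; if several responders choose the same proposer, exactly one of them, chosen uniformly at random, receives $s_i$ and the others receive $0$. A strategy $p$ of a symmetric two-player game with payoff $\Pi$ is evolutionarily stable if for every strategy $q\neq p$ either $\Pi(p,p)>\Pi(q,p)$, or $\Pi(p,p)=\Pi(q,p)$ and $\Pi(p,q)>\Pi(q,q)$. *)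

theory Defs
  imports Complex_Main
begin

definition resp_payoff :: "real \<Rightarrow> real \<Rightarrow> real \<Rightarrow> real \<Rightarrow> real" where
  "resp_payoff s1 s2 p q = s1 * p * (1 - q + q / 2) + s2 * (1 - p) * (q + (1 - q) / 2)"

definition ESS :: "'a set \<Rightarrow> ('a \<Rightarrow> 'a \<Rightarrow> real) \<Rightarrow> 'a \<Rightarrow> bool" where
  "ESS S Pi p \<longleftrightarrow> p \<in> S \<and> (\<forall>q\<in>S. q \<noteq> p \<longrightarrow>
      (Pi p p > Pi q p \<or> (Pi p p = Pi q p \<and> Pi p q > Pi q q)))"

end

theory Submission
  imports Defs
begin

text \<open>Writing pA for the mixed equilibrium, the payoff difference between two
  strategies x, y against q is bilinear: (s1 + s2)/2 * (x - y) * (pA - q).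
  Against pA every strategy is therefore an equally good reply, so stability is
  decided by the second ESS condition, where the difference becomes
  (s1 + s2)/2 * (pA - q)^2 > 0. Conversely, any p other than pA is invaded by pA,
  which is a strictly better reply to p.\<close>

lemma ESS_of_payoff_diff:
  fixes S :: "real set" and Pi :: "real \<Rightarrow> real \<Rightarrow> real"
  assumes "a \<in> S" "c > 0"
    and diff: "\<And>x y q. x \<in> S \<Longrightarrow> y \<in> S \<Longrightarrow> q \<in> S \<Longrightarrow>
      Pi x q - Pi y q = c * (x - y) * (a - q)"
  shows "ESS S Pi a"
  unfolding ESS_def
proof (intro conjI ballI impI disjI2)
  fix q assume "q \<in> S" "q \<noteq> a"
  show "Pi a a = Pi q a"
    using diff[of a q a] \<open>a \<in> S\<close> \<open>q \<in> S\<close> by simp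
  have "Pi a q - Pi q q = c * (a - q)\<^sup>2"
    using diff[of a q q] \<open>a \<in> S\<close> \<open>q \<in> S\<close> by (simp add: power2_eq_square)
  moreover have "c * (a - q)\<^sup>2 > 0"
    using \<open>c > 0\<close> \<open>q \<noteq> a\<close> by simp
  ultimately show "Pi a q > Pi q q" by linarith
qed (fact \<open>a \<in> S\<close>)

lemma ESS_unique_of_payoff_diff:
  fixes S :: "real set" and Pi :: "real \<Rightarrow> real \<Rightarrow> real"
  assumes "a \<in> S" "c > 0"
    and diff: "\<And>x y q. x \<in> S \<Longrightarrow> y \<in> S \<Longrightarrow> q \<in> S \<Longrightarrow>
      Pi x q - Pi y q = c * (x - y) * (a - q)"
    and "ESS S Pi p"
  shows "p = a"
proof (rule ccontr)
  assume "p \<noteq> a"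
  have "p \<in> S"
    using \<open>ESS S Pi p\<close> by (simp add: ESS_def)
  have "Pi p p - Pi a p = - c * (p - a)\<^sup>2"
    using diff[of p a p] \<open>a \<in> S\<close> \<open>p \<in> S\<close> by (simp add: power2_eq_square algebra_simps)
  moreover have "c * (p - a)\<^sup>2 > 0"
    using \<open>c > 0\<close> \<open>p \<noteq> a\<close> by simp
  ultimately have "Pi p p < Pi a p" by linarith
  with \<open>ESS S Pi p\<close> \<open>a \<in> S\<close> \<open>p \<noteq> a\<close> show False
    unfolding ESS_def by force
qed

lemma resp_payoff_diff:
  assumes "s1 + s2 \<noteq> 0"
  shows "resp_payoff s1 s2 x q - resp_payoff s1 s2 y q
    = (s1 + s2) / 2 * (x - y) * ((2 * s1 - s2) / (s1 + s2) - q)"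
  using assms unfolding resp_payoff_def by (simp add: field_simps)

lemma mixed_equilibrium_mem_unit_interval:
  fixes s1 s2 :: real
  assumes "s2 \<le> 2 * s1" "s1 \<le> 2 * s2" "s1 + s2 > 0"
  shows "(2 * s1 - s2) / (s1 + s2) \<in> {0..1}"
  using assms by (simp add: field_simps)

theorem theorem1:
  fixes s1 s2 :: real
  assumes "0 \<le> s1" "s1 \<le> 1" "0 \<le> s2" "s2 \<le> 1"
    and "s1 \<le> s2" "s2 > 0" "s2 < 2 * s1"
  shows "ESS {0..1} (resp_payoff s1 s2) ((2 * s1 - s2) / (s1 + s2))
    \<and> (\<forall>p. ESS {0..1} (resp_payoff s1 s2) p \<longrightarrow> p = (2 * s1 - s2) / (s1 + s2))"
proof -
  have "s1 + s2 > 0" using assms by simp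
  then have mem: "(2 * s1 - s2) / (s1 + s2) \<in> {0..1}"
    using assms by (intro mixed_equilibrium_mem_unit_interval) simp_all
  have c_pos: "(s1 + s2) / 2 > 0"
    using \<open>s1 + s2 > 0\<close> by simp
  have diff: "resp_payoff s1 s2 x q - resp_payoff s1 s2 y q
      = (s1 + s2) / 2 * (x - y) * ((2 * s1 - s2) / (s1 + s2) - q)" for x y q
    using \<open>s1 + s2 > 0\<close> by (simp add: resp_payoff_diff)
  show ?thesis
    using ESS_of_payoff_diff[OF mem c_pos diff] ESS_unique_of_payoff_diff[OF mem c_pos diff]
    by blast
qed

end
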